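(* For every $\varepsilon>0$ and all $N\geqslant1$, $$\sum_{\substack{m,n\geqslant1\\ mn\leqslant N}}(m,n^\infty)^{\frac12}\big((mn)^\sharp\big)^{\frac14}\ll_\varepsilon N^{1+\varepsilon}.$$
   Context: $(m,n^\infty)$ is the largest divisor of $m$ all of whose prime factors divide $n$. For a positive integer $a$, $a^\sharp=\prod_{p^\nu\| a,\ \nu\geqslant2}p^\nu$ is its squarefull part. *)

theory Defs
  imports "HOL-Analysis.Analysis" "HOL-Computational_Algebra.Primes"
begin

text \<open>(m, n^\<infinity>): the largest divisor of m all of whose prime factors divide n.\<close>
definition dvd_part_inf :: "nat \<Rightarrow> nat \<Rightarrow> nat" where
  "dvd_part_inf m n = (\<Prod>p\<in>{p\<in>prime_factors m. p dvd n}. p ^ multiplicity p m)"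

definition squarefull_part :: "nat \<Rightarrow> nat" where
  "squarefull_part a = (\<Prod>p\<in>{p\<in>prime_factors a. multiplicity p a \<ge> 2}. p ^ multiplicity p a)"

end

theory Submission
  imports Defs
begin

text \<open>Rankin's trick: with \<open>\<sigma> = 1 + \<epsilon>\<close>, every term with \<open>mn \<le> N\<close> is at most \<open>N\<^sup>\<sigma>\<close> times
  the same term divided by \<open>(mn)\<^sup>\<sigma>\<close>, and this normalised weight is a product over primes of
  local factors depending only on the exponents \<open>i, j\<close> of \<open>p\<close> in \<open>m, n\<close>. The local exponent of the
  summand is at most \<open>i + j - 1\<close> and at most \<open>3(i + j)/4 - 1/2\<close>, so the sum of the local factors
  over all \<open>(i, j)\<close> is \<open>1 + O(p\<^sup>-\<^sup>\<sigma>)\<close>, and the partial Euler products stay below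
  \<open>exp (O(\<zeta>(\<sigma>)))\<close>.\<close>

lemma prod_prime_powers_filter:
  fixes x :: nat
  assumes "finite P" "\<forall>p\<in>P. prime p" "prime_factors x \<subseteq> P"
  shows "(\<Prod>p\<in>{p\<in>prime_factors x. Q p}. p ^ multiplicity p x)
       = (\<Prod>p\<in>P. p ^ (if Q p then multiplicity p x else 0))"
proof (rule prod.mono_neutral_cong_left)
  show "\<forall>p\<in>P - {p\<in>prime_factors x. Q p}. p ^ (if Q p then multiplicity p x else 0) = 1"
    using assms by (auto simp: prime_factors_multiplicity)
qed (use assms in auto)

lemma prod_prime_powers_superset:
  fixes x :: nat
  assumes "finite P" "\<forall>p\<in>P. prime p" "prime_factors x \<subseteq> P" "x \<noteq> 0"
  shows "(\<Prod>p\<in>P. p ^ multiplicity p x) = x"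
  using prod_prime_powers_filter[OF assms(1-3), of "\<lambda>_. True"] prod_prime_factors[OF assms(4)]
  by simp

lemma dvd_part_inf_eq_prod:
  assumes "finite P" "\<forall>p\<in>P. prime p" "prime_factors m \<subseteq> P"
  shows "dvd_part_inf m n = (\<Prod>p\<in>P. p ^ (if p dvd n then multiplicity p m else 0))"
  unfolding dvd_part_inf_def by (rule prod_prime_powers_filter[OF assms])

lemma squarefull_part_eq_prod:
  assumes "finite P" "\<forall>p\<in>P. prime p" "prime_factors a \<subseteq> P"
  shows "squarefull_part a = (\<Prod>p\<in>P. p ^ (if 2 \<le> multiplicity p a then multiplicity p a else 0))"
  unfolding squarefull_part_def by (rule prod_prime_powers_filter[OF assms])

lemma multiplicity_less_self:
  fixes n :: nat
  assumes "prime p" "n > 0"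
  shows "multiplicity p n < n"
proof -
  have "multiplicity p n < 2 ^ multiplicity p n" by (rule less_exp)
  also have "\<dots> \<le> p ^ multiplicity p n" using prime_ge_2_nat[OF assms(1)] by (rule power_mono) simp
  also have "\<dots> \<le> n" using assms(2) by (intro dvd_imp_le multiplicity_dvd)
  finally show ?thesis .
qed

lemma powr_prod_powers:
  fixes P :: "nat set"
  assumes "\<forall>p\<in>P. p > 0"
  shows "real (\<Prod>p\<in>P. p ^ g p) powr c = (\<Prod>p\<in>P. real p powr (c * real (g p)))"
  using assms by (simp add: prod_powr_distrib powr_realpow[symmetric] powr_powr mult.commute)

text \<open>The exponent of \<open>p\<close> in \<open>(m, n\<^sup>\<infinity>)\<^sup>1\<^sup>/\<^sup>2 ((mn)\<^sup>\<sharp>)\<^sup>1\<^sup>/\<^sup>4\<close> when \<open>p\<^sup>i \<parallel> m\<close> and \<open>p\<^sup>j \<parallel> n\<close>.\<close>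
definition local_exponent :: "nat \<Rightarrow> nat \<Rightarrow> real" where
  "local_exponent i j = (if j > 0 then real i / 2 else 0) + (if 2 \<le> i + j then real (i + j) / 4 else 0)"

lemma local_exponent_le:
  assumes "i + j \<ge> 1"
  shows "local_exponent i j \<le> real (i + j) - 1" "local_exponent i j \<le> 3/4 * real (i + j) - 1/2"
proof -
  define e where "e = (if j > 0 then 2 * i else 0) + (if 2 \<le> i + j then i + j else 0)"
  have "4 * local_exponent i j = real e"
    unfolding local_exponent_def e_def by simp
  moreover have "real (e + 4) \<le> real (4 * (i + j))" "real (e + 2) \<le> real (3 * (i + j))"
    using assms unfolding of_nat_le_iff e_def by auto
  ultimately show "local_exponent i j \<le> real (i + j) - 1" "local_exponent i j \<le> 3/4 * real (i + j) - 1/2"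
    by (simp_all add: field_simps)
qed

definition pair_weight :: "nat \<Rightarrow> nat \<Rightarrow> real" where
  "pair_weight m n = real (dvd_part_inf m n) powr (1/2) * real (squarefull_part (m * n)) powr (1/4)"

definition euler_factor :: "real \<Rightarrow> nat \<Rightarrow> nat \<times> nat \<Rightarrow> real" where
  "euler_factor \<sigma> p = (\<lambda>(i, j). real p powr (local_exponent i j - \<sigma> * real (i + j)))"

lemma euler_factor_nonneg: "euler_factor \<sigma> p ij \<ge> 0"
  by (simp add: euler_factor_def split: prod.split)

lemma pair_weight_eq_prod:
  assumes P: "finite P" "\<forall>p\<in>P. prime p"
    and mn: "prime_factors m \<subseteq> P" "prime_factors n \<subseteq> P" "m \<noteq> 0" "n \<noteq> 0"
  shows "pair_weight m n = real (m * n) powr \<sigma> * (\<Prod>p\<in>P. euler_factor \<sigma> p (multiplicity p m, multiplicity p n))"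
proof -
  have pos: "\<forall>p\<in>P. p > 0" using P(2) prime_gt_0_nat by blast
  have mult: "multiplicity p (m * n) = multiplicity p m + multiplicity p n" if "p \<in> P" for p
    using P(2) that mn by (intro prime_elem_multiplicity_mult_distrib) auto
  have dvd_iff: "p dvd n \<longleftrightarrow> multiplicity p n > 0" if "p \<in> P" for p
    using P(2) that mn(4) by (simp add: prime_multiplicity_gt_zero_iff)
  have pf_mn: "prime_factors (m * n) \<subseteq> P" using mn by (simp add: prime_factors_product)
  have "real (m * n) powr \<sigma> = real (\<Prod>p\<in>P. p ^ multiplicity p (m * n)) powr \<sigma>"
    using prod_prime_powers_superset[OF P pf_mn] mn by simp
  also have "\<dots> = (\<Prod>p\<in>P. real p powr (\<sigma> * real (multiplicity p m + multiplicity p n)))"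
    by (subst powr_prod_powers[OF pos]) (simp_all add: mult)
  finally have norm: "real (m * n) powr \<sigma> = \<dots>" .
  have "pair_weight m n = (\<Prod>p\<in>P. real p powr local_exponent (multiplicity p m) (multiplicity p n))"
    unfolding pair_weight_def dvd_part_inf_eq_prod[OF P mn(1)] squarefull_part_eq_prod[OF P pf_mn]
      powr_prod_powers[OF pos] prod.distrib[symmetric] powr_add[symmetric]
    by (intro prod.cong) (simp_all add: local_exponent_def mult dvd_iff)
  also have "\<dots> = real (m * n) powr \<sigma> * (\<Prod>p\<in>P. euler_factor \<sigma> p (multiplicity p m, multiplicity p n))"
    unfolding norm euler_factor_def
    by (simp add: prod.distrib[symmetric] powr_add[symmetric] cong: prod.cong)
  finally show ?thesis .
qed

lemma euler_factor_le:
  assumes "prime p" "\<sigma> \<ge> 1" "i + j \<ge> 1"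
  shows "euler_factor \<sigma> p (i, j) \<le> 2 powr (1/2) * (2 powr (-1/4)) ^ (i + j) * real p powr (-\<sigma>)"
proof -
  define k where "k = real (i + j)"
  define E where "E = local_exponent i j - \<sigma> * k + \<sigma>"
  have "k \<ge> 1" using assms(3) unfolding k_def by simp
  then have "\<sigma> * k - \<sigma> \<ge> k - 1"
    using mult_nonneg_nonneg[of "\<sigma> - 1" "k - 1"] assms(2) by (simp add: algebra_simps)
  then have E_nonpos: "E \<le> 0" and E_le: "E \<le> 1/2 - k/4"
    using local_exponent_le[OF assms(3), folded k_def] unfolding E_def by linarith+
  have "euler_factor \<sigma> p (i, j) = real p powr E * real p powr (-\<sigma>)"
    unfolding euler_factor_def E_def k_def by (simp add: powr_add[symmetric])
  also have "\<dots> \<le> 2 powr E * real p powr (-\<sigma>)"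
    using prime_ge_2_nat[OF assms(1)] E_nonpos by (intro mult_right_mono powr_mono2') auto
  also have "\<dots> \<le> 2 powr (1/2 - k/4) * real p powr (-\<sigma>)"
    using E_le by (intro mult_right_mono powr_mono) auto
  also have "\<dots> = 2 powr (1/2) * (2 powr (-1/4)) ^ (i + j) * real p powr (-\<sigma>)"
  proof -
    have "1/2 - k/4 = 1/2 + real (i + j) * (-1/4)"
      unfolding k_def by simp
    moreover have "((2::real) powr (-1/4)) ^ (i + j) = 2 powr (real (i + j) * (-1/4))"
      by (rule powr_power) simp
    ultimately
    show ?thesis by (simp only: powr_add)
  qed
  finally show ?thesis .
qed

lemma sum_euler_factor_le:
  assumes "prime p" "\<sigma> \<ge> 1"
  shows "(\<Sum>ij\<in>{0..K} \<times> {0..K}. euler_factor \<sigma> p ij)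
       \<le> 1 + 2 powr (1/2) / (1 - 2 powr (-1/4))\<^sup>2 * real p powr (-\<sigma>)"
proof -
  define r :: real where "r = 2 powr (-1/4)"
  have r: "0 < r" "r < 1" unfolding r_def by (simp_all add: powr_less_one)
  have geom: "(\<Sum>i\<in>{0..K}. r ^ i) \<le> 1 / (1 - r)"
    using sum_le_suminf[OF summable_geometric, of r "{0..K}"] suminf_geometric[of r] r by simp
  have "(\<Sum>ij\<in>{0..K} \<times> {0..K}. euler_factor \<sigma> p ij)
      = 1 + (\<Sum>ij\<in>{0..K} \<times> {0..K} - {(0, 0)}. euler_factor \<sigma> p ij)"
    using prime_gt_0_nat[OF assms(1)] by (subst sum.remove[of _ "(0, 0)"]) (auto simp: euler_factor_def local_exponent_def)
  also have "(\<Sum>ij\<in>{0..K} \<times> {0..K} - {(0, 0)}. euler_factor \<sigma> p ij)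
      \<le> (\<Sum>(i, j)\<in>{0..K} \<times> {0..K} - {(0, 0)}. 2 powr (1/2) * r ^ (i + j) * real p powr (-\<sigma>))"
    by (intro sum_mono) (auto intro!: euler_factor_le[OF assms, folded r_def])
  also have "\<dots> \<le> (\<Sum>(i, j)\<in>{0..K} \<times> {0..K}. 2 powr (1/2) * r ^ (i + j) * real p powr (-\<sigma>))"
    using r by (intro sum_mono2) auto
  also have "\<dots> = 2 powr (1/2) * real p powr (-\<sigma>) * ((\<Sum>i\<in>{0..K}. r ^ i) * (\<Sum>j\<in>{0..K}. r ^ j))"
    by (simp add: sum.cartesian_product[symmetric] sum_product sum_distrib_left power_add ac_simps)
  also have "\<dots> \<le> 2 powr (1/2) * real p powr (-\<sigma>) * (1 / (1 - r) * (1 / (1 - r)))"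
    using r geom by (intro mult_left_mono mult_mono sum_nonneg) auto
  finally show ?thesis
    unfolding r_def by (simp add: power2_eq_square)
qed

lemma sum_prod_multiplicities_le_prod_sum:
  fixes h :: "nat \<Rightarrow> nat \<times> nat \<Rightarrow> real"
  assumes P: "finite P" "\<forall>p\<in>P. prime p"
    and T: "\<And>m n. (m, n) \<in> T \<Longrightarrow> m > 0 \<and> n > 0 \<and> prime_factors m \<union> prime_factors n \<subseteq> P"
    and K: "\<And>m n p. (m, n) \<in> T \<Longrightarrow> p \<in> P \<Longrightarrow> multiplicity p m \<le> K \<and> multiplicity p n \<le> K"
    and h: "\<And>p ij. p \<in> P \<Longrightarrow> h p ij \<ge> 0"
  shows "(\<Sum>(m, n)\<in>T. \<Prod>p\<in>P. h p (multiplicity p m, multiplicity p n))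
       \<le> (\<Prod>p\<in>P. \<Sum>ij\<in>{0..K} \<times> {0..K}. h p ij)"
proof -
  define v where "v = (\<lambda>(m, n). restrict (\<lambda>p. (multiplicity p m, multiplicity p n)) P)"
  have inj: "inj_on v T"
  proof (rule inj_onI, clarify)
    fix m n m' n' assume "(m, n) \<in> T" "(m', n') \<in> T" "v (m, n) = v (m', n')"
    have "multiplicity p m = multiplicity p m' \<and> multiplicity p n = multiplicity p n'" if "prime p" for p
    proof (cases "p \<in> P")
      case True
      then show ?thesis using fun_cong[OF \<open>v (m, n) = v (m', n')\<close>, of p] by (simp add: v_def)
    next
      case False
      then have "p \<notin> prime_factors m \<union> prime_factors n \<union> prime_factors m' \<union> prime_factors n'"
        using T[OF \<open>(m, n) \<in> T\<close>] T[OF \<open>(m', n') \<in> T\<close>] by blast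
      then show ?thesis using that by (simp add: prime_factors_multiplicity)
    qed
    then show "m = m' \<and> n = n'"
      using T[OF \<open>(m, n) \<in> T\<close>] T[OF \<open>(m', n') \<in> T\<close>] by (auto intro: multiplicity_eq_nat)
  qed
  have "(\<Sum>(m, n)\<in>T. \<Prod>p\<in>P. h p (multiplicity p m, multiplicity p n))
      = (\<Sum>\<phi>\<in>v ` T. \<Prod>p\<in>P. h p (\<phi> p))"
    unfolding sum.reindex[OF inj] by (intro sum.cong) (auto simp: v_def intro!: prod.cong)
  also have "\<dots> \<le> (\<Sum>\<phi>\<in>PiE P (\<lambda>_. {0..K} \<times> {0..K}). \<Prod>p\<in>P. h p (\<phi> p))"
    using P h K by (intro sum_mono2 finite_PiE prod_nonneg) (auto simp: v_def)
  also have "\<dots> = (\<Prod>p\<in>P. \<Sum>ij\<in>{0..K} \<times> {0..K}. h p ij)"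
    using P by (intro prod_sum_PiE[symmetric]) auto
  finally show ?thesis .
qed

definition hyperbola_pairs :: "nat \<Rightarrow> (nat \<times> nat) set" where
  "hyperbola_pairs N = {(m, n). 1 \<le> m \<and> 1 \<le> n \<and> m * n \<le> N}"

lemma hyperbola_pairsD:
  assumes "(m, n) \<in> hyperbola_pairs N"
  shows "0 < m" "0 < n" "m \<le> N" "n \<le> N"
    and "prime_factors m \<union> prime_factors n \<subseteq> {p. prime p \<and> p \<le> N}"
proof -
  have mn: "1 \<le> m" "1 \<le> n" "m * n \<le> N" using assms by (simp_all add: hyperbola_pairs_def)
  show "0 < m" "0 < n" using mn by simp_all
  show "m \<le> N" using le_trans[OF mult_le_mono2[of 1 n m] mn(3)] mn(2) by simp
  show "n \<le> N" using le_trans[OF mult_le_mono1[of 1 m n] mn(3)] mn(1) by simp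
  with \<open>m \<le> N\<close> \<open>0 < m\<close> \<open>0 < n\<close>
  show "prime_factors m \<union> prime_factors n \<subseteq> {p. prime p \<and> p \<le> N}"
    by (auto simp: in_prime_factors_iff intro: order_trans[OF dvd_imp_le])
qed

lemma pair_weight_le_euler_product:
  assumes "(m, n) \<in> hyperbola_pairs N" "\<sigma> \<ge> 0"
  shows "pair_weight m n
    \<le> real N powr \<sigma> * (\<Prod>p\<in>{p. prime p \<and> p \<le> N}. euler_factor \<sigma> p (multiplicity p m, multiplicity p n))"
proof -
  note mn = hyperbola_pairsD[OF assms(1)]
  have "real (m * n) \<le> real N"
    using assms(1) by (subst of_nat_le_iff) (simp add: hyperbola_pairs_def)
  moreover have "pair_weight m n = real (m * n) powr \<sigma> *
      (\<Prod>p\<in>{p. prime p \<and> p \<le> N}. euler_factor \<sigma> p (multiplicity p m, multiplicity p n))"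
    using mn by (intro pair_weight_eq_prod) auto
  ultimately show ?thesis
    using assms(2) by (auto intro!: mult_right_mono powr_mono2 prod_nonneg euler_factor_nonneg)
qed

lemma sum_euler_products_bounded:
  assumes "\<sigma> > 1"
  shows "\<exists>C. \<forall>N. (\<Sum>(m, n)\<in>hyperbola_pairs N.
           \<Prod>p\<in>{p. prime p \<and> p \<le> N}. euler_factor \<sigma> p (multiplicity p m, multiplicity p n)) \<le> C"
proof -
  define A :: real where "A = 2 powr (1/2) / (1 - 2 powr (-1/4))\<^sup>2"
  define Z where "Z = (\<Sum>n. real n powr (-\<sigma>))"
  have summable: "summable (\<lambda>n. real n powr (-\<sigma>))"
    using assms by (simp add: summable_real_powr_iff)
  have "(\<Sum>(m, n)\<in>hyperbola_pairs N. \<Prod>p\<in>P. euler_factor \<sigma> p (multiplicity p m, multiplicity p n))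
      \<le> exp (A * Z)" if P_def: "P = {p. prime p \<and> p \<le> N}" for N P
  proof -
    have P: "finite P" "\<forall>p\<in>P. prime p" by (simp_all add: P_def)
    have "(\<Sum>(m, n)\<in>hyperbola_pairs N. \<Prod>p\<in>P. euler_factor \<sigma> p (multiplicity p m, multiplicity p n))
        \<le> (\<Prod>p\<in>P. \<Sum>ij\<in>{0..N} \<times> {0..N}. euler_factor \<sigma> p ij)"
    proof (rule sum_prod_multiplicities_le_prod_sum[OF P])
      fix m n assume "(m, n) \<in> hyperbola_pairs N"
      then show "0 < m \<and> 0 < n \<and> prime_factors m \<union> prime_factors n \<subseteq> P"
        using hyperbola_pairsD[of m n N] unfolding P_def by blast
    next
      fix m n p assume mn: "(m, n) \<in> hyperbola_pairs N" and "p \<in> P"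
      then have "prime p" using P(2) by blast
      then show "multiplicity p m \<le> N \<and> multiplicity p n \<le> N"
        using multiplicity_less_self[of p m] multiplicity_less_self[of p n] hyperbola_pairsD[OF mn] by simp
    qed (rule euler_factor_nonneg)
    also have "\<dots> \<le> (\<Prod>p\<in>P. exp (A * real p powr (-\<sigma>)))"
    proof (rule prod_mono)
      fix p assume "p \<in> P"
      then have "(\<Sum>ij\<in>{0..N} \<times> {0..N}. euler_factor \<sigma> p ij) \<le> 1 + A * real p powr (-\<sigma>)"
        using P(2) assms unfolding A_def by (intro sum_euler_factor_le) auto
      also have "\<dots> \<le> exp (A * real p powr (-\<sigma>))" by (rule exp_ge_add_one_self)
      moreover have "0 \<le> (\<Sum>ij\<in>{0..N} \<times> {0..N}. euler_factor \<sigma> p ij)"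
        by (intro sum_nonneg euler_factor_nonneg)
      ultimately show "0 \<le> (\<Sum>ij\<in>{0..N} \<times> {0..N}. euler_factor \<sigma> p ij) \<and>
          (\<Sum>ij\<in>{0..N} \<times> {0..N}. euler_factor \<sigma> p ij) \<le> exp (A * real p powr (-\<sigma>))"
        by linarith
    qed
    also have "\<dots> = exp (A * (\<Sum>p\<in>P. real p powr (-\<sigma>)))"
      unfolding sum_distrib_left exp_sum[OF P(1)] ..
    also have "\<dots> \<le> exp (A * Z)"
    proof -
      have "(\<Sum>p\<in>P. real p powr (-\<sigma>)) \<le> Z"
        unfolding Z_def by (rule sum_le_suminf[OF summable P(1)]) simp
      moreover have "A \<ge> 0" unfolding A_def by simp
      ultimately show ?thesis by (simp add: mult_left_mono)
    qed
    finally show ?thesis .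
  qed
  then show ?thesis by blast
qed

theorem mainTheorem7:
  fixes \<epsilon> :: real
  assumes "\<epsilon> > 0"
  shows "\<exists>C::real. \<forall>N::nat. N \<ge> 1 \<longrightarrow>
    (\<Sum>(m, n)\<in>{(m, n). m \<ge> 1 \<and> n \<ge> 1 \<and> m * n \<le> N}.
        real (dvd_part_inf m n) powr (1/2) * real (squarefull_part (m * n)) powr (1/4))
      \<le> C * real N powr (1 + \<epsilon>)"
proof -
  define \<sigma> where "\<sigma> = 1 + \<epsilon>"
  obtain C where C: "\<And>N. (\<Sum>(m, n)\<in>hyperbola_pairs N.
      \<Prod>p\<in>{p. prime p \<and> p \<le> N}. euler_factor \<sigma> p (multiplicity p m, multiplicity p n)) \<le> C"
    using sum_euler_products_bounded[of \<sigma>] assms unfolding \<sigma>_def by auto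
  have "(\<Sum>(m, n)\<in>hyperbola_pairs N. pair_weight m n) \<le> C * real N powr \<sigma>" for N
  proof -
    have "(\<Sum>(m, n)\<in>hyperbola_pairs N. pair_weight m n) \<le> real N powr \<sigma> *
        (\<Sum>(m, n)\<in>hyperbola_pairs N.
          \<Prod>p\<in>{p. prime p \<and> p \<le> N}. euler_factor \<sigma> p (multiplicity p m, multiplicity p n))"
      unfolding sum_distrib_left using assms \<sigma>_def
      by (intro sum_mono) (auto simp: case_prod_beta intro!: pair_weight_le_euler_product)
    also have "\<dots> \<le> real N powr \<sigma> * C" using C by (intro mult_left_mono) auto
    finally show ?thesis by (simp add: mult.commute)
  qed
  then show ?thesis unfolding pair_weight_def hyperbola_pairs_def \<sigma>_def by blast
qed

end
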